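(* Let $\mathcal{A},\mathcal{B}$ be Hilbert spaces with $\dim\mathcal{A}=\dim\mathcal{B}=d$, let $|\phi\rangle\in\mathcal{A}\otimes\mathcal{B}$ be an entangled pure state, and let $\rho=\frac{1}{d^2-1}(I_{\mathcal{A}\otimes\mathcal{B}}-|\phi\rangle\langle\phi|)$. Then $\{|\phi\rangle\langle\phi|,\rho\}$ is indistinguishable by PPT operations in the many copy scenario.
   Context: A bipartite positive semidefinite operator $E$ is PPT if its partial transpose $E^{T_B}$ (defined by $(|i\rangle\langle k|\otimes|j\rangle\langle l|)^{T_B}=|i\rangle\langle k|\otimes|l\rangle\langle j|$) is positive semidefinite. A set of orthogonal states $\{\rho_1,\dots,\rho_n\}$ on $\mathcal{A}\otimes\mathcal{B}$ is unambiguously distinguishable by PPT operations if there exist PPT operators $M_1,\dots,M_n$ with $\sum_k M_k=I$ and $\operatorname{tr}(M_i\rho_j)=p_i\delta_{ij}$, $p_i>0$ for all $i,j$; otherwise it is indistinguishable by PPT operations. It is indistinguishable by PPT operations in the many copy scenario if for every positive integer $m$, $\{\rho_1^{\otimes m},\dots,\rho_n^{\otimes m}\}$, regarded as bipartite states with respect to $\mathcal{A}^{\otimes m}:\mathcal{B}^{\otimes m}$, is indistinguishable by PPT operations. *)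

theory Defs
  imports Complex_Main
begin

text \<open>A Hilbert space with orthonormal basis
indexed by a finite set IA (resp. IB); an operator on the tensor product is given by its
matrix entries with respect to the product basis, indexed by pairs (a,b) with a in IA, b in IB.\<close>

type_synonym ('a, 'b) bop = "('a \<times> 'b) \<Rightarrow> ('a \<times> 'b) \<Rightarrow> complex"

definition bid :: "('a, 'b) bop" where
  "bid x y = (if x = y then 1 else 0)"

definition psd_on :: "'c set \<Rightarrow> ('c \<Rightarrow> 'c \<Rightarrow> complex) \<Rightarrow> bool" where
  "psd_on I M \<longleftrightarrow>
     (\<forall>x\<in>I. \<forall>y\<in>I. M x y = cnj (M y x)) \<and>
     (\<forall>v :: 'c \<Rightarrow> complex. let q = (\<Sum>x\<in>I. \<Sum>y\<in>I. cnj (v x) * M x y * v y)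
                             in Im q = 0 \<and> Re q \<ge> 0)"

text \<open>Partial transpose on B:
  (|i><k| \<otimes> |j><l|)^{T_B} = |i><k| \<otimes> |l><j|.\<close>
definition ptB :: "('a, 'b) bop \<Rightarrow> ('a, 'b) bop" where
  "ptB E = (\<lambda>(i, j) (k, l). E (i, l) (k, j))"

definition PPT_on :: "'a set \<Rightarrow> 'b set \<Rightarrow> ('a, 'b) bop \<Rightarrow> bool" where
  "PPT_on IA IB E \<longleftrightarrow> psd_on (IA \<times> IB) E \<and> psd_on (IA \<times> IB) (ptB E)"

definition tr_prod :: "'c set \<Rightarrow> ('c \<Rightarrow> 'c \<Rightarrow> complex) \<Rightarrow> ('c \<Rightarrow> 'c \<Rightarrow> complex) \<Rightarrow> complex" where
  "tr_prod I M R = (\<Sum>x\<in>I. \<Sum>y\<in>I. M x y * R y x)"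

definition PPT_unamb_dist :: "'a set \<Rightarrow> 'b set \<Rightarrow> ('a, 'b) bop list \<Rightarrow> bool" where
  "PPT_unamb_dist IA IB rhos \<longleftrightarrow>
     (\<exists>Ms :: ('a, 'b) bop list. \<exists>p :: nat \<Rightarrow> real.
        length Ms = length rhos \<and>
        (\<forall>i<length Ms. PPT_on IA IB (Ms ! i)) \<and>
        (\<forall>x\<in>IA \<times> IB. \<forall>y\<in>IA \<times> IB. (\<Sum>k<length Ms. (Ms ! k) x y) = bid x y) \<and>
        (\<forall>i<length rhos. p i > 0) \<and>
        (\<forall>i<length rhos. \<forall>j<length rhos.
            tr_prod (IA \<times> IB) (Ms ! i) (rhos ! j) = (if i = j then complex_of_real (p i) else 0)))"

text \<open>Basis of the m-fold tensor power of a space with basis I: words of length m over I.\<close>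
definition words :: "nat \<Rightarrow> 'a set \<Rightarrow> 'a list set" where
  "words m I = {xs. length xs = m \<and> set xs \<subseteq> I}"

text \<open>m-fold tensor power of a bipartite operator, regarded as an operator on
  A^{\<otimes>m} \<otimes> B^{\<otimes>m} (bipartition A^{\<otimes>m} : B^{\<otimes>m}).\<close>
definition btpow :: "nat \<Rightarrow> ('a, 'b) bop \<Rightarrow> ('a list, 'b list) bop" where
  "btpow m R = (\<lambda>(a, b) (a', b'). \<Prod>t<m. R (a ! t, b ! t) (a' ! t, b' ! t))"

definition PPT_indist_many_copy :: "'a set \<Rightarrow> 'b set \<Rightarrow> ('a, 'b) bop list \<Rightarrow> bool" where
  "PPT_indist_many_copy IA IB rhos \<longleftrightarrow>
     (\<forall>m::nat. m > 0 \<longrightarrow> \<not> PPT_unamb_dist (words m IA) (words m IB) (map (btpow m) rhos))"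

definition proj :: "(nat \<times> nat \<Rightarrow> complex) \<Rightarrow> (nat, nat) bop" where
  "proj \<phi> = (\<lambda>x y. \<phi> x * cnj (\<phi> y))"

definition unit_vec :: "nat \<Rightarrow> (nat \<times> nat \<Rightarrow> complex) \<Rightarrow> bool" where
  "unit_vec d \<phi> \<longleftrightarrow> (\<Sum>x\<in>{..<d} \<times> {..<d}. (cmod (\<phi> x))\<^sup>2) = 1"

definition entangled :: "nat \<Rightarrow> (nat \<times> nat \<Rightarrow> complex) \<Rightarrow> bool" where
  "entangled d \<phi> \<longleftrightarrow> \<not> (\<exists>u v :: nat \<Rightarrow> complex. \<forall>i<d. \<forall>j<d. \<phi> (i, j) = u i * v j)"

end

theory Submission
  imports Defs "HOL-Library.Complex_Order"
begin

(* Suppose the m-copy states were unambiguously distinguished, and let M be the PPT operator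
   detecting |phi><phi|^m.  Then tr (M Q^m) = 0 for the projector Q = I - |phi><phi|, so M
   annihilates the range of Q^m, which contains every product vector whose slots
   alpha_t (x) beta_t are all orthogonal to phi.  Slot by slot this extends to all product
   vectors: compressing M to one slot (all other slots fixed to product vectors) yields a PPT
   operator N on A (x) B annihilating every product vector orthogonal to phi.  The rows of N
   are then multiples of phi*, so N = gamma |phi><phi| with gamma >= 0; but the partial
   transpose of |phi><phi| has a negative direction built from a nonvanishing 2x2 minor of
   the entangled phi, so gamma = 0.  Hence M annihilates all product vectors, M = 0, and
   tr (M |phi><phi|^m) = 0, a contradiction. *)

definition qform :: "'c set \<Rightarrow> ('c \<Rightarrow> 'c \<Rightarrow> complex) \<Rightarrow> ('c \<Rightarrow> complex) \<Rightarrow> complex" where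
  "qform I M v = (\<Sum>x\<in>I. \<Sum>y\<in>I. cnj (v x) * M x y * v y)"

definition in_kernel :: "'c set \<Rightarrow> ('c \<Rightarrow> 'c \<Rightarrow> complex) \<Rightarrow> ('c \<Rightarrow> complex) \<Rightarrow> bool" where
  "in_kernel I M v \<longleftrightarrow> (\<forall>x\<in>I. (\<Sum>y\<in>I. M x y * v y) = 0)"

lemma psd_on_iff_qform:
  "psd_on I M \<longleftrightarrow> (\<forall>x\<in>I. \<forall>y\<in>I. M x y = cnj (M y x)) \<and> (\<forall>v. 0 \<le> qform I M v)"
  unfolding psd_on_def qform_def Let_def less_eq_complex_def by auto

lemma psd_on_cnj: "psd_on I M \<Longrightarrow> x \<in> I \<Longrightarrow> y \<in> I \<Longrightarrow> cnj (M x y) = M y x"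
  unfolding psd_on_iff_qform by metis

lemma psd_on_qform_nonneg: "psd_on I M \<Longrightarrow> 0 \<le> qform I M v"
  unfolding psd_on_iff_qform by blast

lemma pos_linear_le_quadratic_imp_nonpos:
  fixes S K :: real
  assumes "\<And>t. t > 0 \<Longrightarrow> t * S \<le> t\<^sup>2 * K"
  shows "S \<le> 0"
proof (rule ccontr)
  assume "\<not> S \<le> 0"
  define t where "t = S / (\<bar>K\<bar> + 1)"
  have "t > 0" using \<open>\<not> S \<le> 0\<close> by (simp add: t_def)
  then have "S \<le> t * K" using assms[of t] by (simp add: power2_eq_square)
  also have "\<dots> \<le> t * \<bar>K\<bar>" using \<open>t > 0\<close> by simp
  also have "\<dots> < S" using \<open>\<not> S \<le> 0\<close> unfolding t_def by (simp add: field_simps)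
  finally show False by simp
qed

lemma cnj_mult_self: "cnj z * z = complex_of_real ((cmod z)\<^sup>2)"
  using complex_norm_square[of z] by (simp only: mult.commute)

lemma psd_on_cong:
  assumes "\<And>x y. x \<in> I \<Longrightarrow> y \<in> I \<Longrightarrow> M x y = M' x y"
  shows "psd_on I M \<longleftrightarrow> psd_on I M'"
  unfolding psd_on_iff_qform qform_def using assms by simp

lemma qform_cong: "(\<And>x. x \<in> I \<Longrightarrow> v x = w x) \<Longrightarrow> qform I M v = qform I M w"
  unfolding qform_def by simp

lemma in_kernel_cong: "(\<And>x. x \<in> I \<Longrightarrow> v x = w x) \<Longrightarrow> in_kernel I M v \<longleftrightarrow> in_kernel I M w"
  unfolding in_kernel_def by simp

lemma psd_on_qform_eq_0_imp_in_kernel: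
  assumes "finite I" and psd: "psd_on I M" and v: "qform I M v = 0"
  shows "in_kernel I M v"
proof -
  define u where "u x = (\<Sum>y\<in>I. M x y * v y)" for x
  define S where "S = (\<Sum>x\<in>I. (cmod (u x))\<^sup>2)"
  have S: "(\<Sum>x\<in>I. cnj (u x) * u x) = of_real S"
    unfolding S_def of_real_sum by (simp only: cnj_mult_self)
  have uv: "(\<Sum>x\<in>I. \<Sum>y\<in>I. cnj (u x) * M x y * v y) = of_real S"
    unfolding S[symmetric] u_def by (simp add: sum_distrib_left mult.assoc)
  have "(\<Sum>x\<in>I. cnj (v x) * M x y) = cnj (u y)" if "y \<in> I" for y
    unfolding u_def cnj_sum
  proof (rule sum.cong[OF refl])
    fix x assume "x \<in> I"
    show "cnj (v x) * M x y = cnj (M y x * v x)"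
      using psd_on_cnj[OF psd that \<open>x \<in> I\<close>] by simp
  qed
  then have vu: "(\<Sum>x\<in>I. \<Sum>y\<in>I. cnj (v x) * M x y * u y) = of_real S"
    unfolding S[symmetric] by (subst sum.swap) (simp add: sum_distrib_right[symmetric])
  have "0 \<le> qform I M (\<lambda>x. v x - of_real t * u x)" for t
    by (rule psd_on_qform_nonneg[OF psd])
  also have "qform I M (\<lambda>x. v x - of_real t * u x)
      = qform I M v - of_real t * (\<Sum>x\<in>I. \<Sum>y\<in>I. cnj (u x) * M x y * v y)
        - of_real t * (\<Sum>x\<in>I. \<Sum>y\<in>I. cnj (v x) * M x y * u y) + of_real t * of_real t * qform I M u" for t
    unfolding qform_def by (simp add: algebra_simps sum_subtractf sum.distrib sum_distrib_left)
  finally have "t * (2 * S) \<le> t\<^sup>2 * Re (qform I M u)" for t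
    unfolding v uv vu by (simp add: less_eq_complex_def power2_eq_square mult.assoc mult.left_commute)
  then have "2 * S \<le> 0" by (rule pos_linear_le_quadratic_imp_nonpos)
  then have "S = 0" unfolding S_def by (simp add: antisym sum_nonneg)
  then show ?thesis
    unfolding in_kernel_def u_def S_def by (simp add: sum_nonneg_eq_0_iff[OF \<open>finite I\<close>])
qed

definition compress :: "'x set \<Rightarrow> ('z \<Rightarrow> 'x \<Rightarrow> complex) \<Rightarrow> ('x \<Rightarrow> 'x \<Rightarrow> complex) \<Rightarrow> 'z \<Rightarrow> 'z \<Rightarrow> complex" where
  "compress S V M z z' = (\<Sum>X\<in>S. \<Sum>Y\<in>S. cnj (V z X) * M X Y * V z' Y)"

lemma sum_swap_nested:
  "(\<Sum>a\<in>A. \<Sum>b\<in>B. \<Sum>c\<in>C. \<Sum>e\<in>E. f a b c e) = (\<Sum>c\<in>C. \<Sum>e\<in>E. \<Sum>a\<in>A. \<Sum>b\<in>B. f a b c e)"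
proof -
  have "(\<Sum>a\<in>A. \<Sum>b\<in>B. \<Sum>c\<in>C. \<Sum>e\<in>E. f a b c e) = (\<Sum>a\<in>A. \<Sum>c\<in>C. \<Sum>e\<in>E. \<Sum>b\<in>B. f a b c e)"
    by (intro sum.cong refl) (simp add: sum.swap[of _ B])
  also have "\<dots> = (\<Sum>c\<in>C. \<Sum>e\<in>E. \<Sum>a\<in>A. \<Sum>b\<in>B. f a b c e)"
    by (simp add: sum.swap[of _ A])
  finally show ?thesis .
qed

lemma qform_compress: "qform Z (compress S V M) x = qform S M (\<lambda>X. \<Sum>z\<in>Z. x z * V z X)"
proof -
  have "qform Z (compress S V M) x
      = (\<Sum>z\<in>Z. \<Sum>z'\<in>Z. \<Sum>X\<in>S. \<Sum>Y\<in>S. cnj (x z) * cnj (V z X) * M X Y * (x z' * V z' Y))"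
    unfolding qform_def compress_def by (simp add: sum_distrib_left sum_distrib_right algebra_simps)
  also have "\<dots> = (\<Sum>X\<in>S. \<Sum>Y\<in>S. \<Sum>z\<in>Z. \<Sum>z'\<in>Z. cnj (x z) * cnj (V z X) * M X Y * (x z' * V z' Y))"
    by (rule sum_swap_nested)
  also have "\<dots> = qform S M (\<lambda>X. \<Sum>z\<in>Z. x z * V z X)"
    unfolding qform_def by (simp add: sum_distrib_left sum_distrib_right algebra_simps)
  finally show ?thesis .
qed

lemma psd_on_compress:
  assumes psd: "psd_on S M"
  shows "psd_on Z (compress S V M)"
  unfolding psd_on_iff_qform qform_compress
proof (intro conjI ballI allI psd_on_qform_nonneg[OF psd])
  fix z z'
  have "cnj (compress S V M z' z) = (\<Sum>X\<in>S. \<Sum>Y\<in>S. V z' X * M Y X * cnj (V z Y))"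
    unfolding compress_def cnj_sum
    by (intro sum.cong refl) (simp add: psd_on_cnj[OF psd])
  also have "\<dots> = compress S V M z z'"
    unfolding compress_def by (subst sum.swap) (simp add: algebra_simps)
  finally show "compress S V M z z' = cnj (compress S V M z' z)" by simp
qed

lemma in_kernel_compress:
  assumes "in_kernel S M (\<lambda>Y. \<Sum>w\<in>Z. x w * V w Y)"
  shows "in_kernel Z (compress S V M) x"
  unfolding in_kernel_def
proof
  fix z
  have "(\<Sum>w\<in>Z. compress S V M z w * x w)
      = (\<Sum>X\<in>S. cnj (V z X) * (\<Sum>Y\<in>S. M X Y * (\<Sum>w\<in>Z. x w * V w Y)))"
    unfolding compress_def
    by (simp add: sum_distrib_left sum_distrib_right algebra_simps) (subst sum.swap, simp add: sum.swap[of _ Z])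
  also have "\<dots> = 0" using assms unfolding in_kernel_def by simp
  finally show "(\<Sum>w\<in>Z. compress S V M z w * x w) = 0" .
qed

lemma ptB_compress_tensor:
  "ptB (compress (SA \<times> SB) (\<lambda>(i, j) (a, b). VA i a * VB j b) M)
   = compress (SA \<times> SB) (\<lambda>(i, j) (a, b). VA i a * cnj (VB j b)) (ptB M)"
proof (intro ext, clarify)
  fix i j k l
  define T where "T a b a' b' = cnj (VA i a * VB l b) * M (a, b) (a', b') * (VA k a' * VB j b')"
    for a b a' b'
  have "ptB (compress (SA \<times> SB) (\<lambda>(i, j) (a, b). VA i a * VB j b) M) (i, j) (k, l)
      = (\<Sum>a\<in>SA. \<Sum>b\<in>SB. \<Sum>a'\<in>SA. \<Sum>b'\<in>SB. T a b a' b')"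
    unfolding ptB_def compress_def T_def by (simp add: sum.cartesian_product')
  also have "\<dots> = (\<Sum>a\<in>SA. \<Sum>a'\<in>SA. \<Sum>b\<in>SB. \<Sum>b'\<in>SB. T a b a' b')"
    by (rule sum.cong[OF refl], rule sum.swap)
  also have "\<dots> = (\<Sum>a\<in>SA. \<Sum>a'\<in>SA. \<Sum>b'\<in>SB. \<Sum>b\<in>SB. T a b a' b')"
    by (rule sum.cong[OF refl], rule sum.cong[OF refl], rule sum.swap)
  also have "\<dots> = (\<Sum>a\<in>SA. \<Sum>b'\<in>SB. \<Sum>a'\<in>SA. \<Sum>b\<in>SB. T a b a' b')"
    by (rule sum.cong[OF refl], rule sum.swap)
  also have "\<dots> = compress (SA \<times> SB) (\<lambda>(i, j) (a, b). VA i a * cnj (VB j b)) (ptB M) (i, j) (k, l)"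
    unfolding ptB_def compress_def T_def by (simp add: sum.cartesian_product' algebra_simps)
  finally show "ptB (compress (SA \<times> SB) (\<lambda>(i, j) (a, b). VA i a * VB j b) M) (i, j) (k, l)
      = compress (SA \<times> SB) (\<lambda>(i, j) (a, b). VA i a * cnj (VB j b)) (ptB M) (i, j) (k, l)" .
qed

definition basis_vec :: "'c \<Rightarrow> 'c \<Rightarrow> complex" where
  "basis_vec i x = (if x = i then 1 else 0)"

definition prod_vec :: "('a \<Rightarrow> complex) \<Rightarrow> ('b \<Rightarrow> complex) \<Rightarrow> 'a \<times> 'b \<Rightarrow> complex" where
  "prod_vec \<alpha> \<beta> = (\<lambda>(i, j). \<alpha> i * \<beta> j)"

definition bilin :: "'a set \<Rightarrow> 'b set \<Rightarrow> ('a \<times> 'b \<Rightarrow> complex) \<Rightarrow> ('a \<Rightarrow> complex) \<Rightarrow> ('b \<Rightarrow> complex) \<Rightarrow> complex" where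
  "bilin A B F \<alpha> \<beta> = (\<Sum>i\<in>A. \<Sum>j\<in>B. F (i, j) * \<alpha> i * \<beta> j)"

lemma sum_mult_basis_vec: "finite I \<Longrightarrow> i \<in> I \<Longrightarrow> (\<Sum>x\<in>I. f x * basis_vec i x) = f i"
  by (simp add: basis_vec_def if_distrib cong: if_cong)

lemma sum_basis_vec_mult: "finite I \<Longrightarrow> i \<in> I \<Longrightarrow> (\<Sum>x\<in>I. basis_vec i x * f x) = f i"
  using sum_mult_basis_vec[of I i f] by (simp add: mult.commute)

lemma bilin_eq_sum_prod_vec: "bilin A B F \<alpha> \<beta> = (\<Sum>z\<in>A \<times> B. F z * prod_vec \<alpha> \<beta> z)"
  by (simp add: bilin_def prod_vec_def sum.cartesian_product' mult.assoc)

lemma in_kernel_prod_vec_iff: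
  "in_kernel (A \<times> B) N (prod_vec \<alpha> \<beta>) \<longleftrightarrow> (\<forall>z\<in>A \<times> B. bilin A B (N z) \<alpha> \<beta> = 0)"
  by (simp add: in_kernel_def bilin_def prod_vec_def sum.cartesian_product' mult.assoc)

lemma bilin_combination_left: "bilin A B F (\<lambda>x. \<alpha> x + c * \<alpha>' x) \<beta> = bilin A B F \<alpha> \<beta> + c * bilin A B F \<alpha>' \<beta>"
  unfolding bilin_def by (simp add: algebra_simps sum.distrib sum_distrib_left)

lemma bilin_combination_right: "bilin A B F \<alpha> (\<lambda>y. \<beta> y + c * \<beta>' y) = bilin A B F \<alpha> \<beta> + c * bilin A B F \<alpha> \<beta>'"
  unfolding bilin_def by (simp add: algebra_simps sum.distrib sum_distrib_left)

lemma bilin_basis_vec: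
  assumes "finite A" "finite B" "i \<in> A" "j \<in> B"
  shows "bilin A B F (basis_vec i) (basis_vec j) = F (i, j)"
proof -
  have "bilin A B F (basis_vec i) (basis_vec j) = (\<Sum>a\<in>A. F (a, j) * basis_vec i a)"
    unfolding bilin_def
  proof (rule sum.cong[OF refl])
    fix a
    show "(\<Sum>b\<in>B. F (a, b) * basis_vec i a * basis_vec j b) = F (a, j) * basis_vec i a"
      using sum_mult_basis_vec[OF assms(2,4), of "\<lambda>b. F (a, b) * basis_vec i a"] .
  qed
  also have "\<dots> = F (i, j)" by (rule sum_mult_basis_vec[OF assms(1,3)])
  finally show ?thesis .
qed

lemma bilin_diff_scaled: "bilin A B (\<lambda>z. F z - c * P z) \<alpha> \<beta> = bilin A B F \<alpha> \<beta> - c * bilin A B P \<alpha> \<beta>"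
  unfolding bilin_def by (simp add: algebra_simps sum_subtractf sum_distrib_left)

text \<open>Evaluating at \<open>(e\<^sub>i + x e\<^sub>p\<^sub>0) \<otimes> (e\<^sub>j + y e\<^sub>r\<^sub>0)\<close> with \<open>x = (1 - P(i,r\<^sub>0)) / P(p\<^sub>0,r\<^sub>0)\<close>
  makes the coefficient of \<open>y\<close> in the \<open>P\<close>-value equal to 1, so \<open>y\<close> can be solved for.\<close>
lemma bilin_annihilator_eq_0:
  assumes fin: "finite A" "finite B" and z0: "p0 \<in> A" "r0 \<in> B"
    and P0: "P (p0, r0) \<noteq> 0" and F0: "F (p0, r0) = 0"
    and ann: "\<And>\<alpha> \<beta>. bilin A B P \<alpha> \<beta> = 0 \<Longrightarrow> bilin A B F \<alpha> \<beta> = 0"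
    and ij: "i \<in> A" "j \<in> B"
  shows "F (i, j) = 0"
proof -
  have key: "F (i, j) + y * F (i, r0) + x * F (p0, j) = 0"
    if "i \<in> A" "j \<in> B" "P (i, j) + y * P (i, r0) + x * P (p0, j) + x * y * P (p0, r0) = 0" for i j x y
  proof -
    let ?\<alpha> = "\<lambda>a. basis_vec i a + x * basis_vec p0 a" and ?\<beta> = "\<lambda>b. basis_vec j b + y * basis_vec r0 b"
    have expand: "bilin A B G ?\<alpha> ?\<beta> = G (i, j) + y * G (i, r0) + x * G (p0, j) + x * y * G (p0, r0)" for G
      unfolding bilin_combination_left bilin_combination_right
      using that(1,2) z0 fin by (simp add: bilin_basis_vec algebra_simps)
    show ?thesis using ann[of ?\<alpha> ?\<beta>] that(3) F0 unfolding expand by simp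
  qed
  have col: "F (i', r0) = 0" if "i' \<in> A" for i'
    using key[OF that z0(2), of 0 "- P (i', r0) / P (p0, r0)"] P0 F0 by simp
  have row: "F (p0, j') = 0" if "j' \<in> B" for j'
    using key[OF z0(1) that, of "- P (p0, j') / P (p0, r0)" 0] P0 F0 by simp
  define x where "x = (1 - P (i, r0)) / P (p0, r0)"
  define y where "y = - (P (i, j) + x * P (p0, j))"
  have "P (i, r0) + x * P (p0, r0) = 1" using P0 unfolding x_def by (simp add: field_simps)
  have "P (i, j) + y * P (i, r0) + x * P (p0, j) + x * y * P (p0, r0)
      = P (i, j) + x * P (p0, j) + y * (P (i, r0) + x * P (p0, r0))"
    by (simp add: algebra_simps)
  also have "\<dots> = 0" using \<open>P (i, r0) + x * P (p0, r0) = 1\<close> unfolding y_def by simp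
  finally have "P (i, j) + y * P (i, r0) + x * P (p0, j) + x * y * P (p0, r0) = 0" .
  from key[OF ij this] show ?thesis using col[OF ij(1)] row[OF ij(2)] by simp
qed

lemma bilin_annihilator_proportional:
  assumes "finite A" "finite B" "p0 \<in> A" "r0 \<in> B" and P0: "P (p0, r0) \<noteq> 0"
    and ann: "\<And>\<alpha> \<beta>. bilin A B P \<alpha> \<beta> = 0 \<Longrightarrow> bilin A B F \<alpha> \<beta> = 0"
    and "i \<in> A" "j \<in> B"
  shows "F (i, j) = F (p0, r0) / P (p0, r0) * P (i, j)"
proof -
  let ?c = "F (p0, r0) / P (p0, r0)"
  have "F (i, j) - ?c * P (i, j) = 0"
  proof (rule bilin_annihilator_eq_0[where P = P and F = "\<lambda>z. F z - ?c * P z"])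
    show "bilin A B (\<lambda>z. F z - ?c * P z) \<alpha> \<beta> = 0" if "bilin A B P \<alpha> \<beta> = 0" for \<alpha> \<beta>
      unfolding bilin_diff_scaled using ann[OF that] that by simp
  qed (use assms in auto)
  then show ?thesis by simp
qed

lemma cnj_basis_vec [simp]: "cnj (basis_vec i x) = basis_vec i x"
  by (simp add: basis_vec_def)

lemma qform_basis_vec:
  assumes "finite I" "z \<in> I"
  shows "qform I M (basis_vec z) = M z z"
proof -
  have "qform I M (basis_vec z) = (\<Sum>x\<in>I. M x z * basis_vec z x)"
    unfolding qform_def
  proof (rule sum.cong[OF refl])
    fix x
    show "(\<Sum>y\<in>I. cnj (basis_vec z x) * M x y * basis_vec z y) = M x z * basis_vec z x"
      using sum_mult_basis_vec[OF assms, of "\<lambda>y. basis_vec z x * M x y"] by (simp add: mult.commute)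
  qed
  also have "\<dots> = M z z" by (rule sum_mult_basis_vec[OF assms])
  finally show ?thesis .
qed

definition outer :: "('c \<Rightarrow> complex) \<Rightarrow> 'c \<Rightarrow> 'c \<Rightarrow> complex" where
  "outer \<phi> x y = \<phi> x * cnj (\<phi> y)"

lemma psd_rows_proportional_imp_outer:
  assumes "finite I" and psd: "psd_on I N" and z0: "z0 \<in> I" "\<phi> z0 \<noteq> 0"
    and rows: "\<And>z w. z \<in> I \<Longrightarrow> w \<in> I \<Longrightarrow> N z w = c z * cnj (\<phi> w)"
  obtains \<gamma> where "0 \<le> \<gamma>" and "\<And>z w. z \<in> I \<Longrightarrow> w \<in> I \<Longrightarrow> N z w = \<gamma> * outer \<phi> z w"
proof
  define \<gamma> where "\<gamma> = cnj (c z0 / \<phi> z0)"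
  have c: "c z = \<gamma> * \<phi> z" if "z \<in> I" for z
  proof -
    have "c z * cnj (\<phi> z0) = cnj (c z0 * cnj (\<phi> z))"
      using psd_on_cnj[OF psd z0(1) that] rows[OF that z0(1)] rows[OF z0(1) that] by simp
    then show ?thesis using z0(2) unfolding \<gamma>_def by (simp add: field_simps)
  qed
  show N: "N z w = \<gamma> * outer \<phi> z w" if "z \<in> I" "w \<in> I" for z w
    using rows[OF that] c[OF that(1)] unfolding outer_def by simp
  have "0 \<le> qform I N (basis_vec z0)" by (rule psd_on_qform_nonneg[OF psd])
  also have "qform I N (basis_vec z0) = \<gamma> * of_real ((cmod (\<phi> z0))\<^sup>2)"
    using N[OF z0(1) z0(1)] qform_basis_vec[OF \<open>finite I\<close> z0(1)]
    unfolding outer_def complex_norm_square[symmetric] by simp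
  finally show "0 \<le> \<gamma>" using z0(2) by (simp add: less_eq_complex_def zero_le_mult_iff)
qed

definition minor :: "('a \<times> 'b \<Rightarrow> complex) \<Rightarrow> 'a \<Rightarrow> 'a \<Rightarrow> 'b \<Rightarrow> 'b \<Rightarrow> complex" where
  "minor \<phi> p q r s = \<phi> (p, r) * \<phi> (q, s) - \<phi> (p, s) * \<phi> (q, r)"

lemma qform_ptB_outer:
  "qform (A \<times> B) (ptB (outer \<phi>)) w
   = (\<Sum>i\<in>A. \<Sum>k\<in>A. (\<Sum>l\<in>B. \<phi> (i, l) * w (k, l)) * cnj (\<Sum>j\<in>B. \<phi> (k, j) * w (i, j)))"
proof -
  have "qform (A \<times> B) (ptB (outer \<phi>)) w
      = (\<Sum>i\<in>A. \<Sum>j\<in>B. \<Sum>k\<in>A. \<Sum>l\<in>B. cnj (w (i, j)) * (\<phi> (i, l) * cnj (\<phi> (k, j))) * w (k, l))"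
    unfolding qform_def ptB_def outer_def by (simp add: sum.cartesian_product')
  also have "\<dots> = (\<Sum>i\<in>A. \<Sum>k\<in>A. \<Sum>j\<in>B. \<Sum>l\<in>B. cnj (w (i, j)) * (\<phi> (i, l) * cnj (\<phi> (k, j))) * w (k, l))"
    by (rule sum.cong[OF refl], rule sum.swap)
  also have "\<dots> = (\<Sum>i\<in>A. \<Sum>k\<in>A. (\<Sum>l\<in>B. \<phi> (i, l) * w (k, l)) * cnj (\<Sum>j\<in>B. \<phi> (k, j) * w (i, j)))"
  proof (intro sum.cong refl)
    fix i k
    have "(\<Sum>l\<in>B. \<phi> (i, l) * w (k, l)) * cnj (\<Sum>j\<in>B. \<phi> (k, j) * w (i, j))
        = (\<Sum>l\<in>B. \<Sum>j\<in>B. \<phi> (i, l) * w (k, l) * cnj (\<phi> (k, j) * w (i, j)))"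
      by (simp add: sum_product)
    also have "\<dots> = (\<Sum>j\<in>B. \<Sum>l\<in>B. cnj (w (i, j)) * (\<phi> (i, l) * cnj (\<phi> (k, j))) * w (k, l))"
      by (subst sum.swap) (simp add: algebra_simps)
    finally show "(\<Sum>j\<in>B. \<Sum>l\<in>B. cnj (w (i, j)) * (\<phi> (i, l) * cnj (\<phi> (k, j))) * w (k, l))
        = (\<Sum>l\<in>B. \<phi> (i, l) * w (k, l)) * cnj (\<Sum>j\<in>B. \<phi> (k, j) * w (i, j))" by simp
  qed
  finally show ?thesis .
qed

text \<open>Writing \<open>X i k\<close> for the inner sums above, this vector makes \<open>X\<close> vanish outside the
  columns \<open>p, q\<close>, with \<open>X p p = X q q = 0\<close> and \<open>X p q = - X q p = minor \<phi> p q r s\<close>.\<close>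
definition peres_witness :: "('a \<times> 'b \<Rightarrow> complex) \<Rightarrow> 'a \<Rightarrow> 'a \<Rightarrow> 'b \<Rightarrow> 'b \<Rightarrow> 'a \<times> 'b \<Rightarrow> complex" where
  "peres_witness \<phi> p q r s = (\<lambda>(k, l).
      basis_vec p k * (\<phi> (p, s) * basis_vec r l - \<phi> (p, r) * basis_vec s l)
    + basis_vec q k * (\<phi> (q, s) * basis_vec r l - \<phi> (q, r) * basis_vec s l))"

lemma qform_ptB_outer_peres_witness:
  assumes fin: "finite A" "finite B" and pq: "p \<in> A" "q \<in> A" and rs: "r \<in> B" "s \<in> B"
  shows "qform (A \<times> B) (ptB (outer \<phi>)) (peres_witness \<phi> p q r s)
    = - 2 * of_real ((cmod (minor \<phi> p q r s))\<^sup>2)"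
proof -
  let ?w = "peres_witness \<phi> p q r s"
  define X where "X i = \<phi> (i, r) * \<phi> (p, s) - \<phi> (i, s) * \<phi> (p, r)" for i
  define Y where "Y i = \<phi> (i, r) * \<phi> (q, s) - \<phi> (i, s) * \<phi> (q, r)" for i
  have col: "(\<Sum>l\<in>B. \<phi> (i, l) * ?w (k, l)) = basis_vec p k * X i + basis_vec q k * Y i" for i k
  proof -
    have "(\<Sum>l\<in>B. \<phi> (i, l) * ?w (k, l))
      = basis_vec p k * \<phi> (p, s) * (\<Sum>l\<in>B. \<phi> (i, l) * basis_vec r l)
      - basis_vec p k * \<phi> (p, r) * (\<Sum>l\<in>B. \<phi> (i, l) * basis_vec s l)
      + basis_vec q k * \<phi> (q, s) * (\<Sum>l\<in>B. \<phi> (i, l) * basis_vec r l)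
      - basis_vec q k * \<phi> (q, r) * (\<Sum>l\<in>B. \<phi> (i, l) * basis_vec s l)"
      unfolding peres_witness_def by (simp add: algebra_simps sum.distrib sum_subtractf sum_distrib_left)
    then show ?thesis
      unfolding sum_mult_basis_vec[OF fin(2) rs(1)] sum_mult_basis_vec[OF fin(2) rs(2)] X_def Y_def
      by (simp add: algebra_simps)
  qed
  have row: "(\<Sum>k\<in>A. (basis_vec p k * X i + basis_vec q k * Y i) * cnj (basis_vec p i * X k + basis_vec q i * Y k))
      = basis_vec p i * (X i * cnj (X p)) + basis_vec q i * (X i * cnj (Y p))
      + basis_vec p i * (Y i * cnj (X q)) + basis_vec q i * (Y i * cnj (Y q))" for i
  proof -
    have "(\<Sum>k\<in>A. (basis_vec p k * X i + basis_vec q k * Y i) * cnj (basis_vec p i * X k + basis_vec q i * Y k))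
      = (\<Sum>k\<in>A. basis_vec p k * (X i * cnj (basis_vec p i * X k + basis_vec q i * Y k)))
      + (\<Sum>k\<in>A. basis_vec q k * (Y i * cnj (basis_vec p i * X k + basis_vec q i * Y k)))"
      by (simp add: algebra_simps sum.distrib)
    then show ?thesis
      unfolding sum_basis_vec_mult[OF fin(1) pq(1)] sum_basis_vec_mult[OF fin(1) pq(2)]
      by (simp add: algebra_simps)
  qed
  have "qform (A \<times> B) (ptB (outer \<phi>)) ?w
      = X p * cnj (X p) + X q * cnj (Y p) + Y p * cnj (X q) + Y q * cnj (Y q)"
    unfolding qform_ptB_outer col row
    by (simp only: sum.distrib sum_basis_vec_mult[OF fin(1) pq(1)] sum_basis_vec_mult[OF fin(1) pq(2)])
  also have "\<dots> = - 2 * (minor \<phi> p q r s * cnj (minor \<phi> p q r s))"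
    unfolding X_def Y_def minor_def by (simp add: algebra_simps)
  finally show ?thesis unfolding complex_norm_square by simp
qed

lemma ptB_outer_scaled_psd_imp_eq_0:
  assumes "finite A" "finite B" "p \<in> A" "q \<in> A" "r \<in> B" "s \<in> B" and "minor \<phi> p q r s \<noteq> 0"
    and "0 \<le> \<gamma>" and psd: "psd_on (A \<times> B) (ptB (\<lambda>x y. \<gamma> * outer \<phi> x y))"
  shows "\<gamma> = 0"
proof -
  let ?w = "peres_witness \<phi> p q r s"
  have "qform (A \<times> B) (ptB (\<lambda>x y. \<gamma> * outer \<phi> x y)) ?w = \<gamma> * qform (A \<times> B) (ptB (outer \<phi>)) ?w"
    unfolding qform_def ptB_def by (simp add: sum_distrib_left algebra_simps split_def)
  then have "0 \<le> \<gamma> * (- 2 * of_real ((cmod (minor \<phi> p q r s))\<^sup>2))"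
    using psd_on_qform_nonneg[OF psd, of ?w] qform_ptB_outer_peres_witness[OF assms(1-6)] by simp
  then show ?thesis using assms(7,8) by (auto simp: less_eq_complex_def complex_eq_iff mult_le_0_iff)
qed

lemma nonzero_minor_imp_distinct: "minor \<phi> p q r s \<noteq> 0 \<Longrightarrow> p \<noteq> q"
  unfolding minor_def by auto

lemma nonzero_minor_imp_nonzero_entry:
  assumes "minor \<phi> p q r s \<noteq> 0"
  obtains i where "i \<in> {p, q}" "\<phi> (i, r) \<noteq> 0"
  using assms that by (cases "\<phi> (p, r) = 0") (auto simp: minor_def)

lemma ppt_annihilating_orthogonal_products_eq_0:
  assumes fin: "finite A" "finite B"
    and psd: "psd_on (A \<times> B) N" and psd_ptB: "psd_on (A \<times> B) (ptB N)"
    and pqrs: "p \<in> A" "q \<in> A" "r \<in> B" "s \<in> B" and minor: "minor \<phi> p q r s \<noteq> 0"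
    and ann: "\<And>\<alpha> \<beta>. bilin A B (\<lambda>z. cnj (\<phi> z)) \<alpha> \<beta> = 0 \<Longrightarrow> in_kernel (A \<times> B) N (prod_vec \<alpha> \<beta>)"
    and zw: "z \<in> A \<times> B" "w \<in> A \<times> B"
  shows "N z w = 0"
proof -
  obtain p0 where p0: "p0 \<in> A" and nz: "\<phi> (p0, r) \<noteq> 0"
    using nonzero_minor_imp_nonzero_entry[OF minor] pqrs by blast
  have rows: "N z w = N z (p0, r) / cnj (\<phi> (p0, r)) * cnj (\<phi> w)" if "z \<in> A \<times> B" "w \<in> A \<times> B" for z w
    using bilin_annihilator_proportional[where P = "\<lambda>z. cnj (\<phi> z)" and F = "N z", OF fin p0 pqrs(3)]
      nz that ann in_kernel_prod_vec_iff by (cases w) blast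
  obtain \<gamma> where "0 \<le> \<gamma>" and N: "\<And>z w. z \<in> A \<times> B \<Longrightarrow> w \<in> A \<times> B \<Longrightarrow> N z w = \<gamma> * outer \<phi> z w"
    using psd_rows_proportional_imp_outer[OF _ psd _ _ rows] fin p0 pqrs(3) nz by blast
  have "psd_on (A \<times> B) (ptB (\<lambda>x y. \<gamma> * outer \<phi> x y))"
    using psd_ptB by (rule psd_on_cong[THEN iffD1, rotated]) (auto simp: ptB_def N)
  then have "\<gamma> = 0" using ptB_outer_scaled_psd_imp_eq_0[OF fin pqrs minor \<open>0 \<le> \<gamma>\<close>] by simp
  then show ?thesis using N[OF zw] by simp
qed

lemma finite_words: "finite A \<Longrightarrow> finite (words m A)"
  unfolding words_def using finite_lists_length_eq[of A m] by (simp add: conj_commute)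

lemma words_nth: "a \<in> words m A \<Longrightarrow> t < m \<Longrightarrow> a ! t \<in> A"
  unfolding words_def by (auto dest: nth_mem)

lemma words_Suc: "words (Suc m) A = (\<lambda>(i, w). i # w) ` (A \<times> words m A)"
  unfolding words_def by (auto simp: length_Suc_conv image_iff)

lemma sum_words_Suc: "(\<Sum>a\<in>words (Suc m) A. F a) = (\<Sum>i\<in>A. \<Sum>w\<in>words m A. F (i # w))"
proof -
  have "inj_on (\<lambda>(i, w). i # w) (A \<times> words m A)" by (auto simp: inj_on_def)
  then show ?thesis unfolding words_Suc by (simp add: sum.reindex sum.cartesian_product')
qed

lemma prod_sum_eq_sum_words:
  fixes h :: "nat \<Rightarrow> 'a \<Rightarrow> 'c::comm_semiring_1"
  shows "(\<Prod>t<m. \<Sum>i\<in>A. h t i) = (\<Sum>a\<in>words m A. \<Prod>t<m. h t (a ! t))"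
proof (induction m arbitrary: h)
  case 0
  have "words 0 A = {[]}" unfolding words_def by auto
  then show ?case by simp
next
  case (Suc m)
  have "(\<Prod>t<Suc m. \<Sum>i\<in>A. h t i) = (\<Sum>i\<in>A. h 0 i) * (\<Prod>t<m. \<Sum>i\<in>A. h (Suc t) i)"
    by (rule prod.lessThan_Suc_shift)
  also have "\<dots> = (\<Sum>i\<in>A. \<Sum>w\<in>words m A. h 0 i * (\<Prod>t<m. h (Suc t) (w ! t)))"
    unfolding Suc.IH by (rule sum_product)
  also have "\<dots> = (\<Sum>a\<in>words (Suc m) A. \<Prod>t<Suc m. h t (a ! t))"
    unfolding sum_words_Suc by (simp only: prod.lessThan_Suc_shift nth_Cons_0 nth_Cons_Suc)
  finally show ?case .
qed

definition slot :: "'a list \<times> 'b list \<Rightarrow> nat \<Rightarrow> 'a \<times> 'b" where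
  "slot X t = (fst X ! t, snd X ! t)"

lemma slot_mem: "X \<in> words m A \<times> words m B \<Longrightarrow> t < m \<Longrightarrow> slot X t \<in> A \<times> B"
  unfolding slot_def by (auto intro: words_nth)

lemma prod_sum_pairs_eq_sum_words:
  fixes h :: "nat \<Rightarrow> 'a \<times> 'b \<Rightarrow> 'c::comm_semiring_1"
  shows "(\<Prod>t<m. \<Sum>z\<in>A \<times> B. h t z) = (\<Sum>X\<in>words m A \<times> words m B. \<Prod>t<m. h t (slot X t))"
proof -
  have "(\<Prod>t<m. \<Sum>z\<in>A \<times> B. h t z) = (\<Sum>a\<in>words m A. \<Prod>t<m. \<Sum>j\<in>B. h t (a ! t, j))"
    unfolding sum.cartesian_product' by (rule prod_sum_eq_sum_words)
  also have "\<dots> = (\<Sum>a\<in>words m A. \<Sum>b\<in>words m B. \<Prod>t<m. h t (a ! t, b ! t))"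
    by (simp only: prod_sum_eq_sum_words)
  finally show ?thesis by (simp add: sum.cartesian_product' slot_def)
qed

definition word_vec :: "nat \<Rightarrow> (nat \<Rightarrow> 'a \<Rightarrow> complex) \<Rightarrow> 'a list \<Rightarrow> complex" where
  "word_vec m f a = (\<Prod>t<m. f t (a ! t))"

lemma prod_vec_word_vec: "prod_vec (word_vec m f) (word_vec m g) X = (\<Prod>t<m. prod_vec (f t) (g t) (slot X t))"
  by (cases X) (simp add: prod_vec_def word_vec_def slot_def prod.distrib)

lemma btpow_eq_prod_slot: "btpow m R X Y = (\<Prod>t<m. R (slot X t) (slot Y t))"
  by (cases X, cases Y) (simp add: btpow_def slot_def)

lemma btpow_divide: "btpow m (\<lambda>x y. R x y / c) X Y = btpow m R X Y / c ^ m"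
  unfolding btpow_eq_prod_slot by (simp add: prod_dividef)

lemma tr_prod_divide: "tr_prod I M (\<lambda>X Y. R X Y / c) = tr_prod I M R / c"
  unfolding tr_prod_def by (simp add: sum_divide_distrib)

lemma btpow_apply_slotwise:
  "(\<Sum>\<kappa>\<in>words m A \<times> words m B. btpow m R X \<kappa> * (\<Prod>t<m. v t (slot \<kappa> t)))
   = (\<Prod>t<m. \<Sum>z\<in>A \<times> B. R (slot X t) z * v t z)"
  unfolding btpow_eq_prod_slot prod_sum_pairs_eq_sum_words by (simp add: prod.distrib)

lemma btpow_projector:
  fixes Q :: "('a, 'b) bop" and A :: "'a set" and B :: "'b set" and m :: nat
  defines "W \<equiv> words m A \<times> words m B"
  assumes proj: "\<And>z z'. z \<in> A \<times> B \<Longrightarrow> z' \<in> A \<times> B \<Longrightarrow> (\<Sum>k\<in>A \<times> B. Q z k * cnj (Q z' k)) = Q z z'"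
    and "X \<in> W" "Y \<in> W"
  shows "(\<Sum>\<kappa>\<in>W. btpow m Q X \<kappa> * cnj (btpow m Q Y \<kappa>)) = btpow m Q X Y"
proof -
  have "(\<Sum>\<kappa>\<in>W. btpow m Q X \<kappa> * cnj (btpow m Q Y \<kappa>))
      = (\<Sum>\<kappa>\<in>W. btpow m Q X \<kappa> * (\<Prod>t<m. cnj (Q (slot Y t) (slot \<kappa> t))))"
    by (simp add: btpow_eq_prod_slot[of m Q Y])
  also have "\<dots> = (\<Prod>t<m. \<Sum>k\<in>A \<times> B. Q (slot X t) k * cnj (Q (slot Y t) k))"
    unfolding W_def by (rule btpow_apply_slotwise)
  also have "\<dots> = btpow m Q X Y"
    unfolding btpow_eq_prod_slot using assms by (intro prod.cong refl) (simp add: proj slot_mem)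
  finally show ?thesis .
qed

lemma trace_projector_eq_0_imp_in_kernel:
  assumes fin: "finite I" and psd: "psd_on I M"
    and proj: "\<And>x y. x \<in> I \<Longrightarrow> y \<in> I \<Longrightarrow> (\<Sum>\<kappa>\<in>I. G x \<kappa> * cnj (G y \<kappa>)) = G x y"
    and tr: "tr_prod I M G = 0"
    and v: "\<And>x. x \<in> I \<Longrightarrow> (\<Sum>\<kappa>\<in>I. G x \<kappa> * v \<kappa>) = v x"
  shows "in_kernel I M v"
proof -
  have "tr_prod I M G = (\<Sum>x\<in>I. \<Sum>y\<in>I. \<Sum>\<kappa>\<in>I. cnj (G x \<kappa>) * M x y * G y \<kappa>)"
    unfolding tr_prod_def
  proof (intro sum.cong refl)
    fix x y assume "x \<in> I" "y \<in> I"
    show "M x y * G y x = (\<Sum>\<kappa>\<in>I. cnj (G x \<kappa>) * M x y * G y \<kappa>)"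
      unfolding proj[OF \<open>y \<in> I\<close> \<open>x \<in> I\<close>, symmetric] by (simp add: sum_distrib_left algebra_simps)
  qed
  also have "\<dots> = (\<Sum>\<kappa>\<in>I. qform I M (\<lambda>y. G y \<kappa>))"
    unfolding qform_def by (subst sum.swap, rule sum.cong[OF refl], rule sum.swap)
  finally have "\<forall>\<kappa>\<in>I. qform I M (\<lambda>y. G y \<kappa>) = 0"
    using tr by (simp add: sum_nonneg_eq_0_iff[OF fin] psd_on_qform_nonneg[OF psd])
  then have col: "(\<Sum>y\<in>I. M x y * G y \<kappa>) = 0" if "x \<in> I" "\<kappa> \<in> I" for x \<kappa>
    using psd_on_qform_eq_0_imp_in_kernel[OF fin psd] that unfolding in_kernel_def by blast
  show ?thesis
    unfolding in_kernel_def
  proof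
    fix x assume "x \<in> I"
    have "(\<Sum>y\<in>I. M x y * v y) = (\<Sum>y\<in>I. M x y * (\<Sum>\<kappa>\<in>I. G y \<kappa> * v \<kappa>))"
      using v by simp
    also have "\<dots> = (\<Sum>\<kappa>\<in>I. v \<kappa> * (\<Sum>y\<in>I. M x y * G y \<kappa>))"
      by (simp add: sum_distrib_left algebra_simps) (rule sum.swap)
    also have "\<dots> = 0" using col[OF \<open>x \<in> I\<close>] by simp
    finally show "(\<Sum>y\<in>I. M x y * v y) = 0" .
  qed
qed

lemma bid_eq_basis_vec: "bid z = basis_vec z"
  by (auto simp: bid_def basis_vec_def)

lemma complement_outer_projector:
  assumes fin: "finite I" and unit: "(\<Sum>k\<in>I. (cmod (\<phi> k))\<^sup>2) = 1" and z: "z \<in> I" "z' \<in> I"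
  shows "(\<Sum>k\<in>I. (bid z k - outer \<phi> z k) * cnj (bid z' k - outer \<phi> z' k)) = bid z z' - outer \<phi> z z'"
proof -
  have norm: "(\<Sum>k\<in>I. cnj (\<phi> k) * \<phi> k) = 1"
    using unit unfolding cnj_mult_self of_real_sum[symmetric] by simp
  have "(\<Sum>k\<in>I. (bid z k - outer \<phi> z k) * cnj (bid z' k - outer \<phi> z' k))
      = (\<Sum>k\<in>I. basis_vec z k * basis_vec z' k) - (\<Sum>k\<in>I. basis_vec z k * \<phi> k) * cnj (\<phi> z')
        - \<phi> z * (\<Sum>k\<in>I. cnj (\<phi> k) * basis_vec z' k) + \<phi> z * (\<Sum>k\<in>I. cnj (\<phi> k) * \<phi> k) * cnj (\<phi> z')"
    unfolding bid_eq_basis_vec outer_def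
    by (simp add: algebra_simps sum.distrib sum_subtractf sum_distrib_left sum_distrib_right)
  also have "\<dots> = bid z z' - outer \<phi> z z'"
    unfolding norm sum_basis_vec_mult[OF fin z(1)] sum_mult_basis_vec[OF fin z(2)] bid_eq_basis_vec outer_def
    by (simp add: basis_vec_def)
  finally show ?thesis .
qed

lemma complement_outer_fixes_orthogonal:
  assumes fin: "finite I" and z: "z \<in> I" and orth: "(\<Sum>k\<in>I. cnj (\<phi> k) * v k) = 0"
  shows "(\<Sum>k\<in>I. (bid z k - outer \<phi> z k) * v k) = v z"
proof -
  have "(\<Sum>k\<in>I. (bid z k - outer \<phi> z k) * v k) = (\<Sum>k\<in>I. basis_vec z k * v k) - \<phi> z * (\<Sum>k\<in>I. cnj (\<phi> k) * v k)"
    unfolding bid_eq_basis_vec outer_def by (simp add: algebra_simps sum_subtractf sum_distrib_left)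
  then show ?thesis unfolding orth sum_basis_vec_mult[OF fin z] by simp
qed

lemma trace_complement_power_eq_0_imp_in_kernel:
  assumes fin: "finite A" "finite B" and unit: "(\<Sum>z\<in>A \<times> B. (cmod (\<phi> z))\<^sup>2) = 1"
    and psd: "psd_on (words m A \<times> words m B) M"
    and tr: "tr_prod (words m A \<times> words m B) M (btpow m (\<lambda>z z'. bid z z' - outer \<phi> z z')) = 0"
    and orth: "\<And>t. t < m \<Longrightarrow> bilin A B (\<lambda>z. cnj (\<phi> z)) (f t) (g t) = 0"
  shows "in_kernel (words m A \<times> words m B) M (prod_vec (word_vec m f) (word_vec m g))"
proof (rule trace_projector_eq_0_imp_in_kernel[OF _ psd _ tr])
  show "finite (words m A \<times> words m B)" using fin by (simp add: finite_words)
next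
  fix X Y assume "X \<in> words m A \<times> words m B" "Y \<in> words m A \<times> words m B"
  with fin unit show "(\<Sum>\<kappa>\<in>words m A \<times> words m B.
      btpow m (\<lambda>z z'. bid z z' - outer \<phi> z z') X \<kappa> * cnj (btpow m (\<lambda>z z'. bid z z' - outer \<phi> z z') Y \<kappa>))
    = btpow m (\<lambda>z z'. bid z z' - outer \<phi> z z') X Y"
    by (intro btpow_projector complement_outer_projector) auto
next
  fix X assume X: "X \<in> words m A \<times> words m B"
  have "(\<Sum>z\<in>A \<times> B. (bid (slot X t) z - outer \<phi> (slot X t) z) * prod_vec (f t) (g t) z)
      = prod_vec (f t) (g t) (slot X t)" if "t < m" for t
    using complement_outer_fixes_orthogonal[OF _ slot_mem[OF X that]] fin orth[OF that]
    unfolding bilin_eq_sum_prod_vec by simp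
  then show "(\<Sum>\<kappa>\<in>words m A \<times> words m B. btpow m (\<lambda>z z'. bid z z' - outer \<phi> z z') X \<kappa>
      * prod_vec (word_vec m f) (word_vec m g) \<kappa>) = prod_vec (word_vec m f) (word_vec m g) X"
    unfolding prod_vec_word_vec btpow_apply_slotwise[where v = "\<lambda>t. prod_vec (f t) (g t)"] by simp
qed

text \<open>\<open>slot_embed m t f i\<close> is the word vector \<open>f 0 \<otimes> \<dots> \<otimes> e\<^sub>i \<otimes> \<dots> \<otimes> f (m - 1)\<close>,
  with the basis vector \<open>e\<^sub>i\<close> in slot \<open>t\<close>.\<close>
definition slot_embed :: "nat \<Rightarrow> nat \<Rightarrow> (nat \<Rightarrow> 'a \<Rightarrow> complex) \<Rightarrow> 'a \<Rightarrow> 'a list \<Rightarrow> complex" where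
  "slot_embed m t f i a = (if a ! t = i then \<Prod>u\<in>{..<m} - {t}. f u (a ! u) else 0)"

lemma sum_slot_embed:
  assumes "finite A" "a \<in> words m A" "t < m"
  shows "(\<Sum>i\<in>A. \<alpha> i * slot_embed m t f i a) = word_vec m (f(t := \<alpha>)) a"
proof -
  have "(\<Sum>i\<in>A. \<alpha> i * slot_embed m t f i a) = \<alpha> (a ! t) * (\<Prod>u\<in>{..<m} - {t}. f u (a ! u))"
    using words_nth[OF assms(2,3)] \<open>finite A\<close> unfolding slot_embed_def by (simp add: if_distrib cong: if_cong)
  also have "\<dots> = word_vec m (f(t := \<alpha>)) a"
  proof -
    have "(\<Prod>u\<in>{..<m} - {t}. (f(t := \<alpha>)) u (a ! u)) = (\<Prod>u\<in>{..<m} - {t}. f u (a ! u))"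
      by (rule prod.cong) auto
    then show ?thesis unfolding word_vec_def using \<open>t < m\<close> by (simp add: prod.remove[of "{..<m}" t])
  qed
  finally show ?thesis .
qed

lemma ppt_slot_step:
  fixes M :: "('a list, 'b list) bop" and A :: "'a set" and B :: "'b set" and m :: nat
  defines "W \<equiv> words m A \<times> words m B"
  assumes fin: "finite A" "finite B" and psd: "psd_on W M" and psd_ptB: "psd_on W (ptB M)"
    and pqrs: "p \<in> A" "q \<in> A" "r \<in> B" "s \<in> B" and minor: "minor \<phi> p q r s \<noteq> 0"
    and "t < m"
    and IH: "\<And>\<alpha> \<beta>. bilin A B (\<lambda>z. cnj (\<phi> z)) \<alpha> \<beta> = 0 \<Longrightarrow>
      in_kernel W M (prod_vec (word_vec m (f(t := \<alpha>))) (word_vec m (g(t := \<beta>))))"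
  shows "in_kernel W M (prod_vec (word_vec m f) (word_vec m g))"
proof -
  define V where "V = (\<lambda>(i, j) (a, b). slot_embed m t f i a * slot_embed m t g j b)"
  define N where "N = compress W V M"
  have embed: "(\<Sum>z\<in>A \<times> B. prod_vec \<alpha> \<beta> z * V z X)
      = prod_vec (word_vec m (f(t := \<alpha>))) (word_vec m (g(t := \<beta>))) X" if "X \<in> W" for \<alpha> \<beta> X
  proof -
    obtain a b where X: "X = (a, b)" "a \<in> words m A" "b \<in> words m B" using \<open>X \<in> W\<close> unfolding W_def by auto
    have "(\<Sum>z\<in>A \<times> B. prod_vec \<alpha> \<beta> z * V z X)
        = (\<Sum>i\<in>A. \<alpha> i * slot_embed m t f i a) * (\<Sum>j\<in>B. \<beta> j * slot_embed m t g j b)"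
      by (simp add: X(1) sum_product sum.cartesian_product' V_def prod_vec_def mult.assoc mult.commute mult.left_commute)
    then show ?thesis
      unfolding X sum_slot_embed[OF fin(1) X(2) \<open>t < m\<close>] sum_slot_embed[OF fin(2) X(3) \<open>t < m\<close>] by (simp add: prod_vec_def)
  qed
  have "psd_on (A \<times> B) N" unfolding N_def by (rule psd_on_compress[OF psd])
  moreover have "psd_on (A \<times> B) (ptB N)"
    unfolding N_def V_def W_def ptB_compress_tensor by (rule psd_on_compress[OF psd_ptB[unfolded W_def]])
  moreover have "in_kernel (A \<times> B) N (prod_vec \<alpha> \<beta>)" if "bilin A B (\<lambda>z. cnj (\<phi> z)) \<alpha> \<beta> = 0" for \<alpha> \<beta>
  proof -
    have "in_kernel W M (\<lambda>X. \<Sum>z\<in>A \<times> B. prod_vec \<alpha> \<beta> z * V z X)"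
      using IH[OF that] in_kernel_cong[of W "\<lambda>X. \<Sum>z\<in>A \<times> B. prod_vec \<alpha> \<beta> z * V z X", OF embed] by simp
    then show ?thesis unfolding N_def by (rule in_kernel_compress)
  qed
  ultimately have "N z w = 0" if "z \<in> A \<times> B" "w \<in> A \<times> B" for z w
    using ppt_annihilating_orthogonal_products_eq_0[OF fin _ _ pqrs minor _ that] by blast
  then have "qform (A \<times> B) N (prod_vec (f t) (g t)) = 0" unfolding qform_def by simp
  then have "qform W M (prod_vec (word_vec m f) (word_vec m g)) = 0"
    unfolding N_def qform_compress
    using qform_cong[of W "\<lambda>X. \<Sum>z\<in>A \<times> B. prod_vec (f t) (g t) z * V z X", OF embed] by simp
  then show ?thesis using psd_on_qform_eq_0_imp_in_kernel[OF _ psd] fin unfolding W_def by (simp add: finite_words)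
qed

lemma ppt_kills_orthogonal_products_imp_kills_products:
  fixes M :: "('a list, 'b list) bop" and A :: "'a set" and B :: "'b set" and m :: nat
  defines "W \<equiv> words m A \<times> words m B"
  assumes fin: "finite A" "finite B" and psd: "psd_on W M" and psd_ptB: "psd_on W (ptB M)"
    and pqrs: "p \<in> A" "q \<in> A" "r \<in> B" "s \<in> B" and minor: "minor \<phi> p q r s \<noteq> 0"
    and orth_kill: "\<And>f g. (\<And>t. t < m \<Longrightarrow> bilin A B (\<lambda>z. cnj (\<phi> z)) (f t) (g t) = 0) \<Longrightarrow>
      in_kernel W M (prod_vec (word_vec m f) (word_vec m g))"
  shows "in_kernel W M (prod_vec (word_vec m f) (word_vec m g))"
proof -
  have "\<forall>f g. (\<forall>t. n \<le> t \<longrightarrow> t < m \<longrightarrow> bilin A B (\<lambda>z. cnj (\<phi> z)) (f t) (g t) = 0) \<longrightarrow>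
      in_kernel W M (prod_vec (word_vec m f) (word_vec m g))" for n
  proof (induction n)
    case 0
    then show ?case using orth_kill by simp
  next
    case (Suc n)
    show ?case
    proof (intro allI impI)
      fix f g assume orth: "\<forall>t. Suc n \<le> t \<longrightarrow> t < m \<longrightarrow> bilin A B (\<lambda>z. cnj (\<phi> z)) (f t) (g t) = 0"
      show "in_kernel W M (prod_vec (word_vec m f) (word_vec m g))"
      proof (cases "n < m")
        case True
        show ?thesis unfolding W_def
          by (rule ppt_slot_step[OF fin psd[unfolded W_def] psd_ptB[unfolded W_def] pqrs minor True])
            (use Suc.IH orth in \<open>auto simp: W_def Suc_le_eq\<close>)
      next
        case False
        then show ?thesis using Suc.IH orth by auto
      qed
    qed
  qed
  from this[of m] show ?thesis by simp
qed

lemma word_vec_basis_vec: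
  assumes "length a = m" "length a0 = m"
  shows "word_vec m (\<lambda>t. basis_vec (a0 ! t)) a = basis_vec a0 a"
proof (cases "a = a0")
  case False
  then obtain t where "t < m" "a ! t \<noteq> a0 ! t" using assms nth_equalityI by metis
  then show ?thesis using False unfolding word_vec_def basis_vec_def by auto
qed (simp add: word_vec_def basis_vec_def)

lemma in_kernel_all_products_imp_eq_0:
  assumes fin: "finite A" "finite B"
    and kill: "\<And>f g. in_kernel (words m A \<times> words m B) M (prod_vec (word_vec m f) (word_vec m g))"
    and X: "X \<in> words m A \<times> words m B" and Y: "Y \<in> words m A \<times> words m B"
  shows "M X Y = 0"
proof -
  have "prod_vec (word_vec m (\<lambda>t. basis_vec (fst Y ! t))) (word_vec m (\<lambda>t. basis_vec (snd Y ! t))) Z = basis_vec Y Z"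
    if "Z \<in> words m A \<times> words m B" for Z
    using that Y by (cases Z, cases Y) (simp add: prod_vec_def words_def word_vec_basis_vec basis_vec_def)
  then have "in_kernel (words m A \<times> words m B) M (basis_vec Y)"
    using kill in_kernel_cong by blast
  then have "(\<Sum>Z\<in>words m A \<times> words m B. M X Z * basis_vec Y Z) = 0"
    using X unfolding in_kernel_def by blast
  then show ?thesis using Y fin by (simp add: sum_mult_basis_vec finite_words)
qed

lemma ppt_trace_scaled_complement_power_eq_0_imp_eq_0:
  fixes M :: "('a list, 'b list) bop" and A :: "'a set" and B :: "'b set" and m :: nat
  defines "W \<equiv> words m A \<times> words m B"
  assumes fin: "finite A" "finite B" and unit: "(\<Sum>z\<in>A \<times> B. (cmod (\<phi> z))\<^sup>2) = 1"
    and pqrs: "p \<in> A" "q \<in> A" "r \<in> B" "s \<in> B" and minor: "minor \<phi> p q r s \<noteq> 0"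
    and ppt: "PPT_on (words m A) (words m B) M"
    and "c \<noteq> 0" and tr: "tr_prod W M (btpow m (\<lambda>z z'. (bid z z' - outer \<phi> z z') / c)) = 0"
    and "X \<in> W" "Y \<in> W"
  shows "M X Y = 0"
proof -
  have psd: "psd_on W M" and psd_ptB: "psd_on W (ptB M)" using ppt unfolding PPT_on_def W_def by auto
  have "tr_prod W M (btpow m (\<lambda>z z'. bid z z' - outer \<phi> z z')) = 0"
    using tr \<open>c \<noteq> 0\<close> unfolding btpow_divide tr_prod_divide by simp
  then have "in_kernel W M (prod_vec (word_vec m f) (word_vec m g))" for f g
    unfolding W_def
    using ppt_kills_orthogonal_products_imp_kills_products[OF fin psd[unfolded W_def] psd_ptB[unfolded W_def] pqrs minor]
      trace_complement_power_eq_0_imp_in_kernel[OF fin unit psd[unfolded W_def]]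
    by blast
  then show ?thesis using in_kernel_all_products_imp_eq_0[OF fin] \<open>X \<in> W\<close> \<open>Y \<in> W\<close> unfolding W_def by blast
qed

lemma nonproduct_imp_nonzero_minor:
  assumes nonproduct: "\<nexists>u v. \<forall>i\<in>A. \<forall>j\<in>B. \<phi> (i, j) = u i * v j"
  shows "\<exists>p\<in>A. \<exists>q\<in>A. \<exists>r\<in>B. \<exists>s\<in>B. minor \<phi> p q r s \<noteq> 0"
proof (rule ccontr)
  assume "\<not> ?thesis"
  then have vanish: "minor \<phi> p q r s = 0" if "p \<in> A" "q \<in> A" "r \<in> B" "s \<in> B" for p q r s
    using that by blast
  show False
  proof (cases "\<exists>p0\<in>A. \<exists>r0\<in>B. \<phi> (p0, r0) \<noteq> 0")
    case True
    then obtain p0 r0 where z0: "p0 \<in> A" "r0 \<in> B" "\<phi> (p0, r0) \<noteq> 0" by blast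
    have factor: "\<phi> (i, j) = \<phi> (i, r0) * (\<phi> (p0, j) / \<phi> (p0, r0))" if "i \<in> A" "j \<in> B" for i j
      using vanish[OF z0(1) that(1) z0(2) that(2)] z0(3) unfolding minor_def by (simp add: field_simps)
    have "\<exists>u v. \<forall>i\<in>A. \<forall>j\<in>B. \<phi> (i, j) = u i * v j"
      by (intro exI[of _ "\<lambda>i. \<phi> (i, r0)"] exI[of _ "\<lambda>j. \<phi> (p0, j) / \<phi> (p0, r0)"] ballI) (simp add: factor)
    then show False using nonproduct by blast
  next
    case False
    have "\<exists>u v. \<forall>i\<in>A. \<forall>j\<in>B. \<phi> (i, j) = u i * v j"
      by (intro exI[of _ "\<lambda>_. 0"] ballI) (use False in auto)
    then show False using nonproduct by blast
  qed
qed

lemma PPT_unamb_dist_two_imp_detector: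
  assumes "PPT_unamb_dist IA IB [\<rho>\<^sub>1, \<rho>\<^sub>2]"
  obtains M where "PPT_on IA IB M" "tr_prod (IA \<times> IB) M \<rho>\<^sub>1 \<noteq> 0" "tr_prod (IA \<times> IB) M \<rho>\<^sub>2 = 0"
proof -
  obtain Ms and p :: "nat \<Rightarrow> real" where len: "length Ms = length [\<rho>\<^sub>1, \<rho>\<^sub>2]"
    and ppt: "\<forall>i<length Ms. PPT_on IA IB (Ms ! i)" and pos: "\<forall>i<length [\<rho>\<^sub>1, \<rho>\<^sub>2]. p i > 0"
    and tr: "\<forall>i<length [\<rho>\<^sub>1, \<rho>\<^sub>2]. \<forall>j<length [\<rho>\<^sub>1, \<rho>\<^sub>2].
      tr_prod (IA \<times> IB) (Ms ! i) ([\<rho>\<^sub>1, \<rho>\<^sub>2] ! j) = (if i = j then complex_of_real (p i) else 0)"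
    using assms unfolding PPT_unamb_dist_def by blast
  show ?thesis
  proof (rule that[of "Ms ! 0"])
    show "PPT_on IA IB (Ms ! 0)" using ppt len by simp
    show "tr_prod (IA \<times> IB) (Ms ! 0) \<rho>\<^sub>1 \<noteq> 0" using tr[rule_format, of 0 0] pos[rule_format, of 0] by simp
    show "tr_prod (IA \<times> IB) (Ms ! 0) \<rho>\<^sub>2 = 0" using tr[rule_format, of 0 1] by simp
  qed
qed

lemma entangled_obtains_nonzero_minor:
  assumes "entangled d \<phi>"
  obtains p q r s where "p \<in> {..<d}" "q \<in> {..<d}" "r \<in> {..<d}" "s \<in> {..<d}" "minor \<phi> p q r s \<noteq> 0"
proof -
  have "\<nexists>u v. \<forall>i\<in>{..<d}. \<forall>j\<in>{..<d}. \<phi> (i, j) = u i * v j"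
    using assms unfolding entangled_def lessThan_iff[symmetric] Ball_def by simp
  from nonproduct_imp_nonzero_minor[OF this] show thesis using that by blast
qed

lemma proj_eq_outer: "proj = outer"
  by (intro ext) (simp add: proj_def outer_def)

theorem theorem2:
  fixes d :: nat and \<phi> :: "nat \<times> nat \<Rightarrow> complex"
  assumes "unit_vec d \<phi>"
    and "entangled d \<phi>"
  defines "\<rho> \<equiv> (\<lambda>x y. (bid x y - proj \<phi> x y) / of_nat (d\<^sup>2 - 1))"
  shows "PPT_indist_many_copy {..<d} {..<d} [proj \<phi>, \<rho>]"
  unfolding PPT_indist_many_copy_def
proof (intro allI impI notI)
  fix m :: nat
  let ?W = "words m {..<d} \<times> words m {..<d}"
  assume "PPT_unamb_dist (words m {..<d}) (words m {..<d}) (map (btpow m) [proj \<phi>, \<rho>])"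
  then obtain M where ppt: "PPT_on (words m {..<d}) (words m {..<d}) M"
    and tr_\<phi>: "tr_prod ?W M (btpow m (proj \<phi>)) \<noteq> 0" and tr_\<rho>: "tr_prod ?W M (btpow m \<rho>) = 0"
    by (auto elim: PPT_unamb_dist_two_imp_detector)
  obtain p q r s where pqrs: "p \<in> {..<d}" "q \<in> {..<d}" "r \<in> {..<d}" "s \<in> {..<d}"
    and minor: "minor \<phi> p q r s \<noteq> 0"
    using entangled_obtains_nonzero_minor[OF assms(2)] .
  have "1 < d" using nonzero_minor_imp_distinct[OF minor] pqrs by auto
  then have c: "(of_nat (d\<^sup>2 - 1) :: complex) \<noteq> 0"
    unfolding of_nat_eq_0_iff using one_less_power[of d 2] by simp
  have "M X Y = 0" if "X \<in> ?W" "Y \<in> ?W" for X Y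
    using ppt_trace_scaled_complement_power_eq_0_imp_eq_0
        [OF _ _ _ pqrs minor ppt c tr_\<rho>[unfolded \<rho>_def proj_eq_outer] that] assms(1)
    unfolding unit_vec_def by simp
  then show False using tr_\<phi> unfolding tr_prod_def by simp
qed

end
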